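(* Let $n\ge1$, $\preceq$ an admissible order on $L([0,1])$, $G\colon L([0,1])^n\to L([0,1])$ non-decreasing and $F\colon L([0,1])^2\to L([0,1])$ non-decreasing in the first variable. Then the IV Sugeno-like $FG$-functional $\mathbf S_m^{F,G}$ is non-decreasing (in each argument, w.r.t. $\preceq$) for every symmetric IV fuzzy measure $m$.
   Context: $N=\{1,\dots,n\}$. $L([0,1])=\{[a,b]:0\le a\le b\le1\}$, $\mathbf0=[0,0]$, $\mathbf1=[1,1]$. An admissible order $\preceq$ is a total order on $L([0,1])$ with $[a,b]\preceq[c,d]$ whenever $a\le c$, $b\le d$. All monotonicity is w.r.t. $\preceq$ (for $G$, in each argument). An IV fuzzy measure w.r.t. $\preceq$ is $m\colon2^N\to L([0,1])$, $m(\emptyset)=\mathbf0$, $m(N)=\mathbf1$, $m(A)\preceq m(B)$ for $A\subseteq B$; symmetric if $m(A)=m(B)$ whenever $|A|=|B|$. For a permutation $\sigma$, $E_{\sigma(i)}=\{\sigma(i),\dots,\sigma(n)\}$. $\mathbf S_m^{F,G}(X_1,\dots,X_n)=G\big(F(X_{\sigma(1)},m(E_{\sigma(1)})),\dots,F(X_{\sigma(n)},m(E_{\sigma(n)}))\big)$ with $\sigma$ any permutation such that $X_{\sigma(1)}\preceq\dots\preceq X_{\sigma(n)}$ (independent of the choice of $\sigma$ for symmetric $m$). *)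

theory Defs
  imports Complex_Main "HOL-Combinatorics.Permutations"
begin

text \<open>Closed subintervals [a,b] of [0,1] are represented by pairs (a,b).\<close>
type_synonym ivl = "real \<times> real"

definition LI :: "ivl set" where
  "LI = {(a, b). 0 \<le> a \<and> a \<le> b \<and> b \<le> 1}"

definition ivl0 :: ivl where "ivl0 = (0, 0)"
definition ivl1 :: ivl where "ivl1 = (1, 1)"

definition admissible_order :: "(ivl \<Rightarrow> ivl \<Rightarrow> bool) \<Rightarrow> bool" where
  "admissible_order le \<longleftrightarrow>
     (\<forall>x\<in>LI. le x x) \<and>
     (\<forall>x\<in>LI. \<forall>y\<in>LI. le x y \<and> le y x \<longrightarrow> x = y) \<and>
     (\<forall>x\<in>LI. \<forall>y\<in>LI. \<forall>z\<in>LI. le x y \<and> le y z \<longrightarrow> le x z) \<and>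
     (\<forall>x\<in>LI. \<forall>y\<in>LI. le x y \<or> le y x) \<and>
     (\<forall>a b c d. (a, b) \<in> LI \<and> (c, d) \<in> LI \<and> a \<le> c \<and> b \<le> d \<longrightarrow> le (a, b) (c, d))"

text \<open>Index set N is {0..<n}; elements of L^n are lists of length n with entries in LI.\<close>
definition IV_fuzzy_measure ::
  "(ivl \<Rightarrow> ivl \<Rightarrow> bool) \<Rightarrow> nat \<Rightarrow> (nat set \<Rightarrow> ivl) \<Rightarrow> bool" where
  "IV_fuzzy_measure le n m \<longleftrightarrow>
     (\<forall>A. A \<subseteq> {..<n} \<longrightarrow> m A \<in> LI) \<and>
     m {} = ivl0 \<and> m {..<n} = ivl1 \<and>
     (\<forall>A B. A \<subseteq> B \<and> B \<subseteq> {..<n} \<longrightarrow> le (m A) (m B))"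

definition symmetric_measure :: "nat \<Rightarrow> (nat set \<Rightarrow> ivl) \<Rightarrow> bool" where
  "symmetric_measure n m \<longleftrightarrow>
     (\<forall>A B. A \<subseteq> {..<n} \<and> B \<subseteq> {..<n} \<and> card A = card B \<longrightarrow> m A = m B)"

definition maps_into_L_n :: "nat \<Rightarrow> (ivl list \<Rightarrow> ivl) \<Rightarrow> bool" where
  "maps_into_L_n n G \<longleftrightarrow>
     (\<forall>xs. length xs = n \<and> set xs \<subseteq> LI \<longrightarrow> G xs \<in> LI)"

definition nondecr_each_arg :: "(ivl \<Rightarrow> ivl \<Rightarrow> bool) \<Rightarrow> nat \<Rightarrow> (ivl list \<Rightarrow> ivl) \<Rightarrow> bool" where
  "nondecr_each_arg le n G \<longleftrightarrow>
     (\<forall>xs i y. length xs = n \<and> set xs \<subseteq> LI \<and> i < n \<and> y \<in> LI \<and> le (xs ! i) y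
        \<longrightarrow> le (G xs) (G (xs[i := y])))"

definition maps_into_L_2 :: "(ivl \<Rightarrow> ivl \<Rightarrow> ivl) \<Rightarrow> bool" where
  "maps_into_L_2 F \<longleftrightarrow> (\<forall>x\<in>LI. \<forall>y\<in>LI. F x y \<in> LI)"

definition nondecr_first :: "(ivl \<Rightarrow> ivl \<Rightarrow> bool) \<Rightarrow> (ivl \<Rightarrow> ivl \<Rightarrow> ivl) \<Rightarrow> bool" where
  "nondecr_first le F \<longleftrightarrow>
     (\<forall>x\<in>LI. \<forall>y\<in>LI. \<forall>z\<in>LI. le x y \<longrightarrow> le (F x z) (F y z))"

definition sorting_perm :: "(ivl \<Rightarrow> ivl \<Rightarrow> bool) \<Rightarrow> ivl list \<Rightarrow> (nat \<Rightarrow> nat) \<Rightarrow> bool" where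
  "sorting_perm le xs \<sigma> \<longleftrightarrow>
     \<sigma> permutes {..<length xs} \<and>
     (\<forall>i j. i \<le> j \<and> j < length xs \<longrightarrow> le (xs ! \<sigma> i) (xs ! \<sigma> j))"

text \<open>IV Sugeno-like FG-functional; E_sigma(i) = sigma ` {i..<n}.\<close>
definition sugeno_FG ::
  "(ivl \<Rightarrow> ivl \<Rightarrow> bool) \<Rightarrow> (ivl \<Rightarrow> ivl \<Rightarrow> ivl) \<Rightarrow> (ivl list \<Rightarrow> ivl) \<Rightarrow> (nat set \<Rightarrow> ivl)
     \<Rightarrow> ivl list \<Rightarrow> ivl" where
  "sugeno_FG le F G m xs =
     (let \<sigma> = (SOME \<sigma>. sorting_perm le xs \<sigma>)
      in G (map (\<lambda>i. F (xs ! \<sigma> i) (m (\<sigma> ` {i..<length xs}))) [0..<length xs]))"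

end

theory Submission
  imports Defs
begin

text \<open>
  Since m is symmetric, m (\<sigma> ` {k..<n}) = m {k..<n} depends only on the position k,
  so the functional is G applied to F(k-th smallest argument, m {k..<n}), k < n.
  Raising one argument raises no order statistic: if the k-th smallest value dropped,
  the k+1 smallest new arguments would all sit at positions of the k smallest old ones.
  Monotonicity of F and G finishes the proof.
\<close>

lemma sorting_perm_permutes: "sorting_perm le xs \<sigma> \<Longrightarrow> \<sigma> permutes {..<length xs}"
  unfolding sorting_perm_def by simp

lemma sorting_perm_nth_in_LI:
  assumes "sorting_perm le xs \<sigma>" "set xs \<subseteq> LI" "k < length xs"
  shows "xs ! \<sigma> k \<in> LI"
  using permutes_in_image[OF sorting_perm_permutes[OF assms(1)]] assms(2,3) by auto

locale ivl_total_preorder =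
  fixes le :: "ivl \<Rightarrow> ivl \<Rightarrow> bool"
  assumes trans_LI: "x \<in> LI \<Longrightarrow> y \<in> LI \<Longrightarrow> z \<in> LI \<Longrightarrow> le x y \<Longrightarrow> le y z \<Longrightarrow> le x z"
    and total_LI: "x \<in> LI \<Longrightarrow> y \<in> LI \<Longrightarrow> le x y \<or> le y x"
begin

lemma refl_LI: "x \<in> LI \<Longrightarrow> le x x"
  using total_LI by blast

definition count_below :: "ivl list \<Rightarrow> ivl \<Rightarrow> nat" where
  "count_below xs a = card {l. l < length xs \<and> \<not> le a (xs ! l)}"

lemma le_if_count_below_le:
  assumes xs: "set xs \<subseteq> LI" and a: "a \<in> LI" and b: "b \<in> set xs"
    and count: "count_below xs a \<le> count_below xs b"
  shows "le a b"
proof (rule ccontr)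
  assume not_ab: "\<not> le a b"
  have b_LI: "b \<in> LI" using b xs by blast
  with a not_ab have ba: "le b a" using total_LI by blast
  obtain j where j: "j < length xs" "b = xs ! j" using b by (metis in_set_conv_nth)
  have "{l. l < length xs \<and> \<not> le b (xs ! l)} \<subset> {l. l < length xs \<and> \<not> le a (xs ! l)}"
  proof
    show "{l. l < length xs \<and> \<not> le b (xs ! l)} \<subseteq> {l. l < length xs \<and> \<not> le a (xs ! l)}"
    proof safe
      fix l assume "l < length xs" "\<not> le b (xs ! l)" "le a (xs ! l)"
      moreover have "xs ! l \<in> LI" using xs \<open>l < length xs\<close> by auto
      ultimately show False using trans_LI[OF b_LI a] ba by blast
    qed
    show "{l. l < length xs \<and> \<not> le b (xs ! l)} \<noteq> {l. l < length xs \<and> \<not> le a (xs ! l)}"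
      using j not_ab refl_LI[OF b_LI] by blast
  qed
  then have "count_below xs b < count_below xs a"
    unfolding count_below_def by (intro psubset_card_mono) auto
  with count show False by simp
qed

lemma sorting_perm_exists:
  assumes "set xs \<subseteq> LI"
  obtains \<sigma> where "sorting_perm le xs \<sigma>"
proof -
  define ys where "ys = sort_key (count_below xs) xs"
  have "mset ys = mset xs" unfolding ys_def by simp
  then obtain \<sigma> where \<sigma>: "\<sigma> permutes {..<length xs}" "permute_list \<sigma> xs = ys"
    by (rule mset_eq_permutation)
  have ys_nth: "ys ! k = xs ! \<sigma> k" if "k < length xs" for k
    using \<sigma> that by (metis permute_list_nth)
  have "le (xs ! \<sigma> i) (xs ! \<sigma> j)" if "i \<le> j" "j < length xs" for i j
  proof -
    have sorted: "sorted (map (count_below xs) ys)" and len: "length ys = length xs"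
      unfolding ys_def by simp_all
    have "count_below xs (ys ! i) \<le> count_below xs (ys ! j)"
      using sorted_nth_mono[OF sorted, of i j] that len by simp
    moreover have "ys ! j \<in> set xs" "ys ! i \<in> set xs"
      using that \<open>mset ys = mset xs\<close> mset_eq_length[OF \<open>mset ys = mset xs\<close>]
      by (metis le_less_trans mset_eq_setD nth_mem)+
    ultimately have "le (ys ! i) (ys ! j)"
      using le_if_count_below_le assms by blast
    with that show ?thesis by (simp add: ys_nth)
  qed
  with \<sigma>(1) show thesis by (intro that[of \<sigma>]) (simp add: sorting_perm_def)
qed

lemma order_statistic_mono:
  assumes len: "length xs = n" "length ys = n"
    and LI: "set xs \<subseteq> LI" "set ys \<subseteq> LI"
    and pointwise: "\<And>j. j < n \<Longrightarrow> le (xs ! j) (ys ! j)"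
    and \<sigma>: "sorting_perm le xs \<sigma>" and \<tau>: "sorting_perm le ys \<tau>" and k: "k < n"
  shows "le (xs ! \<sigma> k) (ys ! \<tau> k)"
proof (rule ccontr)
  have \<sigma>_perm: "\<sigma> permutes {..<n}" and \<tau>_perm: "\<tau> permutes {..<n}"
    using sorting_perm_permutes[OF \<sigma>] sorting_perm_permutes[OF \<tau>] len by simp_all
  have x_LI: "xs ! j \<in> LI" and y_LI: "ys ! j \<in> LI" if "j < n" for j
    using LI len that by auto
  define a where "a = xs ! \<sigma> k"
  define b where "b = ys ! \<tau> k"
  have a_LI: "a \<in> LI" and b_LI: "b \<in> LI"
    unfolding a_def b_def using sorting_perm_nth_in_LI \<sigma> \<tau> LI len k by auto
  assume "\<not> le (xs ! \<sigma> k) (ys ! \<tau> k)"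
  then have not_ab: "\<not> le a b" by (simp add: a_def b_def)
  have "\<tau> ` {..k} \<subseteq> \<sigma> ` {..<k}"
  proof
    fix j assume "j \<in> \<tau> ` {..k}"
    then obtain l where l: "l \<le> k" "j = \<tau> l" by auto
    have j: "j < n" using l k permutes_in_image[OF \<tau>_perm] by auto
    have "le (ys ! j) b" using \<tau> l k len unfolding sorting_perm_def b_def by auto
    then have "le (xs ! j) b" using trans_LI[OF x_LI[OF j] y_LI[OF j] b_LI] pointwise[OF j] by blast
    then have not_a_xj: "\<not> le a (xs ! j)" using trans_LI[OF a_LI x_LI[OF j] b_LI] not_ab by blast
    obtain p where p: "p < n" "j = \<sigma> p"
      using j permutes_image[OF \<sigma>_perm] by (metis imageE lessThan_iff)
    have "p < k"
    proof (rule ccontr)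
      assume "\<not> p < k"
      then have "le a (xs ! j)" using \<sigma> p len unfolding sorting_perm_def a_def by auto
      with not_a_xj show False by simp
    qed
    with p show "j \<in> \<sigma> ` {..<k}" by auto
  qed
  then have "card (\<tau> ` {..k}) \<le> card (\<sigma> ` {..<k})" by (intro card_mono) auto
  also have "\<dots> \<le> k" using card_image_le[of "{..<k}" \<sigma>] by simp
  finally show False using card_image[OF permutes_inj_on[OF \<tau>_perm]] by simp
qed

lemma nondecr_each_arg_pointwise:
  assumes G_LI: "maps_into_L_n n G" and G_mono: "nondecr_each_arg le n G"
    and len: "length xs = n" "length ys = n"
    and LI: "set xs \<subseteq> LI" "set ys \<subseteq> LI"
    and pointwise: "\<And>j. j < n \<Longrightarrow> le (xs ! j) (ys ! j)"
  shows "le (G xs) (G ys)"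
proof -
  have "le (G xs) (G (take j ys @ drop j xs))" if "j \<le> n" for j
    using that
  proof (induction j)
    case 0
    show ?case using refl_LI G_LI LI len unfolding maps_into_L_n_def by simp
  next
    case (Suc j)
    define zs where "zs = take j ys @ drop j xs"
    have j: "j < n" using Suc.prems by simp
    have zs: "length zs = n" "set zs \<subseteq> LI"
      unfolding zs_def using j len LI set_drop_subset[of j xs] set_take_subset[of j ys] by auto
    have yj: "ys ! j \<in> LI" using LI len j by auto
    have next_zs: "take (Suc j) ys @ drop (Suc j) xs = zs[j := ys ! j]"
      using j len unfolding zs_def by (simp add: list_eq_iff_nth_eq nth_append nth_list_update)
    have "le (zs ! j) (ys ! j)" using pointwise[OF j] j len by (simp add: zs_def nth_append)
    then have step: "le (G zs) (G (zs[j := ys ! j]))"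
      using G_mono zs j yj unfolding nondecr_each_arg_def by blast
    have "G xs \<in> LI" "G zs \<in> LI" "G (zs[j := ys ! j]) \<in> LI"
      using G_LI zs LI len set_update_subsetI[OF zs(2) yj] unfolding maps_into_L_n_def by auto
    moreover have "le (G xs) (G zs)" using Suc.IH j unfolding zs_def by simp
    ultimately show ?case using trans_LI step next_zs by metis
  qed
  from this[of n] show ?thesis using len by simp
qed

lemma sugeno_FG_symmetric:
  assumes m: "symmetric_measure n m" and len: "length xs = n" and LI: "set xs \<subseteq> LI"
  obtains \<sigma> where "sorting_perm le xs \<sigma>"
    and "sugeno_FG le F G m xs = G (map (\<lambda>k. F (xs ! \<sigma> k) (m {k..<n})) [0..<n])"
proof -
  define \<sigma> where "\<sigma> = (SOME \<sigma>. sorting_perm le xs \<sigma>)"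
  have \<sigma>: "sorting_perm le xs \<sigma>"
    unfolding \<sigma>_def using sorting_perm_exists[OF LI] by (metis someI)
  have \<sigma>_perm: "\<sigma> permutes {..<n}" using sorting_perm_permutes[OF \<sigma>] len by simp
  have "m (\<sigma> ` {k..<n}) = m {k..<n}" for k
  proof -
    have "card (\<sigma> ` {k..<n}) = card {k..<n}"
      using card_image[OF permutes_inj_on[OF \<sigma>_perm]] by simp
    moreover have "\<sigma> ` {k..<n} \<subseteq> {..<n}" using permutes_image[OF \<sigma>_perm] by auto
    moreover have "{k..<n} \<subseteq> {..<n}" by auto
    ultimately show ?thesis using m unfolding symmetric_measure_def by blast
  qed
  then have "sugeno_FG le F G m xs = G (map (\<lambda>k. F (xs ! \<sigma> k) (m {k..<n})) [0..<n])"
    unfolding sugeno_FG_def Let_def \<sigma>_def[symmetric] len by simp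
  with \<sigma> show thesis by (rule that)
qed

lemma sugeno_FG_mono:
  assumes G: "maps_into_L_n n G" "nondecr_each_arg le n G"
    and F: "maps_into_L_2 F" "nondecr_first le F"
    and m_LI: "\<And>A. A \<subseteq> {..<n} \<Longrightarrow> m A \<in> LI" and m_sym: "symmetric_measure n m"
    and len: "length xs = n" "length ys = n"
    and LI: "set xs \<subseteq> LI" "set ys \<subseteq> LI"
    and pointwise: "\<And>j. j < n \<Longrightarrow> le (xs ! j) (ys ! j)"
  shows "le (sugeno_FG le F G m xs) (sugeno_FG le F G m ys)"
proof -
  obtain \<sigma> where \<sigma>: "sorting_perm le xs \<sigma>"
    and xs_eq: "sugeno_FG le F G m xs = G (map (\<lambda>k. F (xs ! \<sigma> k) (m {k..<n})) [0..<n])"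
    using sugeno_FG_symmetric[OF m_sym len(1) LI(1)] .
  obtain \<tau> where \<tau>: "sorting_perm le ys \<tau>"
    and ys_eq: "sugeno_FG le F G m ys = G (map (\<lambda>k. F (ys ! \<tau> k) (m {k..<n})) [0..<n])"
    using sugeno_FG_symmetric[OF m_sym len(2) LI(2)] .
  have m_k: "m {k..<n} \<in> LI" for k by (rule m_LI) auto
  have x_k: "xs ! \<sigma> k \<in> LI" and y_k: "ys ! \<tau> k \<in> LI" if "k < n" for k
    using sorting_perm_nth_in_LI \<sigma> \<tau> LI len that by auto
  have "le (F (xs ! \<sigma> k) (m {k..<n})) (F (ys ! \<tau> k) (m {k..<n}))" if k: "k < n" for k
    using F(2) x_k[OF k] y_k[OF k] m_k order_statistic_mono[OF len LI pointwise \<sigma> \<tau> k]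
    unfolding nondecr_first_def by blast
  moreover have "F (xs ! \<sigma> k) (m {k..<n}) \<in> LI" "F (ys ! \<tau> k) (m {k..<n}) \<in> LI" if "k < n" for k
    using F(1) x_k y_k m_k that unfolding maps_into_L_2_def by auto
  ultimately show ?thesis
    unfolding xs_eq ys_eq by (intro nondecr_each_arg_pointwise[OF G]) auto
qed

end

lemma admissible_order_total_preorder:
  "admissible_order le \<Longrightarrow> ivl_total_preorder le"
  unfolding admissible_order_def by unfold_locales blast+

theorem proposition12:
  fixes n :: nat and le :: "ivl \<Rightarrow> ivl \<Rightarrow> bool"
    and G :: "ivl list \<Rightarrow> ivl" and F :: "ivl \<Rightarrow> ivl \<Rightarrow> ivl" and m :: "nat set \<Rightarrow> ivl"
  assumes "n \<ge> 1"
    and "admissible_order le"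
    and "maps_into_L_n n G" and "nondecr_each_arg le n G"
    and "maps_into_L_2 F" and "nondecr_first le F"
    and "IV_fuzzy_measure le n m" and "symmetric_measure n m"
  shows "nondecr_each_arg le n (sugeno_FG le F G m)"
proof -
  interpret ivl_total_preorder le
    using assms(2) by (rule admissible_order_total_preorder)
  have m_LI: "\<And>A. A \<subseteq> {..<n} \<Longrightarrow> m A \<in> LI"
    using assms(7) unfolding IV_fuzzy_measure_def by blast
  show ?thesis unfolding nondecr_each_arg_def
  proof (intro allI impI)
    fix xs i y
    assume xs: "length xs = n \<and> set xs \<subseteq> LI \<and> i < n \<and> y \<in> LI \<and> le (xs ! i) y"
    have "le (xs ! j) (xs[i := y] ! j)" if "j < n" for j
    proof (cases "j = i")
      case False
      have "xs ! j \<in> LI" using xs that by auto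
      with False show ?thesis by (simp add: refl_LI)
    qed (use xs in simp)
    with xs show "le (sugeno_FG le F G m xs) (sugeno_FG le F G m (xs[i := y]))"
      by (intro sugeno_FG_mono[OF assms(3-6) m_LI assms(8)]) (simp_all add: set_update_subsetI)
  qed
qed

end
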